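(* Let $n$ agents share an additive valuation $v$ and suppose there are $0<L\le R$ with $v(g)\in[L,R]$ for every item $g$. Consider the online algorithm that in each round $t$ outputs $A^t=$ the allocation returned by Algorithm 3 run on $M_t=\{g_1,\dots,g_t\}$. Then every $A^t$ is a contiguous EF1 allocation of $M_t$, and the total number of adjustments is $O\!\left(\frac{R}{L}n^2T\right)$.
   Context: Items $g_1,\dots,g_T$ arrive online on a line. Contiguous allocation: agent $j$ receives the $j$-th block from the left. For a contiguous allocation $A$, $P(A)=(\ell_0,\dots,\ell_n)$ with $\ell_0=0$ and $P_j(A)$ the index of the last item of $A_j$. Leximin allocation: contiguous allocation maximizing the lowest agent value, then the second-lowest, and so on; the leximin$^2$ allocation is the leximin one with lexicographically smallest $P(A)$. Algorithm 3 (input $v$, item line $M$): let $A$ be the contiguous leximin$^2$ allocation of $M$; fix $i\in\arg\min_j v(A_j)$; for $j=1,\dots,i-1$ in order, while agent $i$ envies agent $j$ even up to one item, move the rightmost item of $A_j$ to $A_{j+1}$; then for $j=n,\dots,i+1$ in order, while agent $i$ envies agent $j$ even up to one item, move the leftmost item of $A_j$ to $A_{j-1}$; return $A$. Agent $i$ envies agent $j$ even up to one item if $A_j\neq\emptyset$ and $v(A_i)<v(A_j\setminus\{g\})$ for all $g\in A_j$. EF1: for all $i,j$, $A_j=\emptyset$ or some $g\in A_j$ has $v(A_i)\ge v(A_j\setminus\{g\})$. The number of adjustments is $\sum_{t=1}^{T-1}|\{g\in M_t: g \text{ is assigned to different agents in } A^t, A^{t+1}\}|$. *)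

theory Defs
  imports Complex_Main "HOL-Library.While_Combinator"
begin

text \<open>Items are identified with their arrival index 1,2,...; the line order is the
arrival order, so M_t = {1..t}.  A contiguous allocation of M_t to agents 1..n is
represented by its boundary vector P(A) = [l_0,...,l_n] (a list of length n+1) with
l_0 = 0, l_n = t, nondecreasing; agent j gets items {l_(j-1)+1 .. l_j}.\<close>

definition contig :: "nat \<Rightarrow> nat \<Rightarrow> nat list \<Rightarrow> bool" where
  "contig n t P \<longleftrightarrow> length P = Suc n \<and> P ! 0 = 0 \<and> P ! n = t \<and> sorted P"

definition blk :: "nat list \<Rightarrow> nat \<Rightarrow> nat set" where
  "blk P j = {P ! (j - 1) <.. P ! j}"

definition val :: "(nat \<Rightarrow> real) \<Rightarrow> nat set \<Rightarrow> real" where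
  "val v S = (\<Sum>g\<in>S. v g)"

definition agent_vals :: "(nat \<Rightarrow> real) \<Rightarrow> nat \<Rightarrow> nat list \<Rightarrow> real list" where
  "agent_vals v n P = map (\<lambda>j. val v (blk P j)) [1..<Suc n]"

definition is_leximin :: "(nat \<Rightarrow> real) \<Rightarrow> nat \<Rightarrow> nat \<Rightarrow> nat list \<Rightarrow> bool" where
  "is_leximin v n t P \<longleftrightarrow> contig n t P \<and>
     (\<forall>Q. contig n t Q \<longrightarrow> \<not> ord_class.lexordp (sort (agent_vals v n P)) (sort (agent_vals v n Q)))"

definition is_leximin2 :: "(nat \<Rightarrow> real) \<Rightarrow> nat \<Rightarrow> nat \<Rightarrow> nat list \<Rightarrow> bool" where
  "is_leximin2 v n t P \<longleftrightarrow> is_leximin v n t P \<and>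
     (\<forall>Q. is_leximin v n t Q \<longrightarrow> \<not> ord_class.lexordp Q P)"

definition envies_ef1 :: "(nat \<Rightarrow> real) \<Rightarrow> nat list \<Rightarrow> nat \<Rightarrow> nat \<Rightarrow> bool" where
  "envies_ef1 v P i j \<longleftrightarrow> blk P j \<noteq> {} \<and>
     (\<forall>g\<in>blk P j. val v (blk P i) < val v (blk P j - {g}))"

definition EF1 :: "(nat \<Rightarrow> real) \<Rightarrow> nat \<Rightarrow> nat list \<Rightarrow> bool" where
  "EF1 v n P \<longleftrightarrow> (\<forall>i\<in>{1..n}. \<forall>j\<in>{1..n}.
     blk P j = {} \<or> (\<exists>g\<in>blk P j. val v (blk P i) \<ge> val v (blk P j - {g})))"

text \<open>Left phase: for j = 1..i-1, while i envies j (EF1), move the rightmost item of A_j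
to A_(j+1), i.e. decrease l_j.\<close>
definition left_phase :: "(nat \<Rightarrow> real) \<Rightarrow> nat \<Rightarrow> nat list \<Rightarrow> nat list" where
  "left_phase v i P = foldl (\<lambda>Q j. while (\<lambda>Q. envies_ef1 v Q i j) (\<lambda>Q. Q[j := Q ! j - 1]) Q)
                           P [1..<i]"

text \<open>Right phase: for j = n, n-1, ..., i+1, while i envies j (EF1), move the leftmost item of
A_j to A_(j-1), i.e. increase l_(j-1).\<close>
definition right_phase :: "(nat \<Rightarrow> real) \<Rightarrow> nat \<Rightarrow> nat \<Rightarrow> nat list \<Rightarrow> nat list" where
  "right_phase v n i P = foldl (\<lambda>Q j. while (\<lambda>Q. envies_ef1 v Q i j)
                                   (\<lambda>Q. Q[j - 1 := Q ! (j - 1) + 1]) Q)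
                           P (rev [Suc i..<Suc n])"

text \<open>Possible outputs of Algorithm 3 on M_t (over all choices of the minimum agent i).\<close>
definition alg3 :: "(nat \<Rightarrow> real) \<Rightarrow> nat \<Rightarrow> nat \<Rightarrow> nat list \<Rightarrow> bool" where
  "alg3 v n t Q \<longleftrightarrow> (\<exists>P i. is_leximin2 v n t P \<and> i \<in> {1..n} \<and>
      (\<forall>j\<in>{1..n}. val v (blk P i) \<le> val v (blk P j)) \<and>
      Q = right_phase v n i (left_phase v i P))"

definition adjustments :: "nat \<Rightarrow> nat \<Rightarrow> (nat \<Rightarrow> nat list) \<Rightarrow> nat" where
  "adjustments n T A = (\<Sum>t\<in>{1..<T}.
      card {g\<in>{1..t}. \<not> (\<exists>j\<in>{1..n}. g \<in> blk (A t) j \<and> g \<in> blk (A (Suc t)) j)})"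

end

theory Submission
  imports Defs "HOL-Library.Multiset"
begin

text \<open>Let \<open>P\<close> be the leximin allocation and \<open>i\<close> an agent of least value \<open>m\<close>. Every
  move of Algorithm 3 takes an item out of a bundle that \<open>i\<close> envies even up to one item
  and hands it to a neighbour: the donor stays above \<open>m\<close> and the receiver rises above \<open>m\<close>.
  Were the receiver \<open>i\<close> itself, the result would be a contiguous allocation with fewer
  agents at value \<open>m\<close> and none below, contradicting leximin optimality. Hence both phases
  keep \<open>i\<close>'s bundle and all bundles worth at least \<open>m\<close>; at the end \<open>i\<close> envies nobody up
  to one item, and as \<open>i\<close> holds a least valuable bundle of a common valuation, the output
  is EF1.

  Comparing with the greedy partition that cuts at the proportional shares \<open>jV/n\<close> gives
  \<open>m \<ge> V/n - R\<close>; since all bundles are worth at least \<open>m\<close>, every cut of the output lies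
  within \<open>nR\<close> (in value) of its proportional share. A new item shifts the shares by at
  most \<open>R\<close>, so between consecutive rounds each cut moves by at most \<open>(2n+1)R/L\<close> items,
  and only items between an old and a new cut change hands, at most \<open>3n\<^sup>2R/L\<close> per round.\<close>

lemma sorted_list_update:
  assumes "sorted xs" "k < length xs"
    and "0 < k \<Longrightarrow> xs ! (k - 1) \<le> x" and "Suc k < length xs \<Longrightarrow> x \<le> xs ! Suc k"
  shows "sorted (xs[k := x])"
  using assms unfolding sorted_iff_nth_Suc by (auto simp: nth_list_update)

lemma sorted_eq_replicate_min_append:
  fixes m :: "'a::linorder"
  assumes "sorted zs" "\<forall>z\<in>set zs. m \<le> z"
  shows "zs = replicate (count_list zs m) m @ filter (\<lambda>z. m < z) zs"
  using assms
proof (induction zs)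
  case (Cons z zs)
  show ?case
  proof (cases "z = m")
    case True
    then show ?thesis using Cons by (simp add: replicate_app_Cons_same)
  next
    case False
    with Cons have "\<forall>y\<in>set (z # zs). m < y" by force
    then show ?thesis by (force simp: count_list_0_iff)
  qed
qed simp

lemma lexordp_sort_if_fewer_minima:
  fixes m :: "'a::linorder"
  assumes "length xs = length ys" "\<forall>x\<in>set xs. m \<le> x" "\<forall>y\<in>set ys. m \<le> y"
    and fewer: "count_list ys m < count_list xs m"
  shows "ord_class.lexordp (sort xs) (sort ys)"
proof -
  define c where "c = count_list xs m"
  define c' where "c' = count_list ys m"
  have count_sort: "count_list (sort zs) m = count_list zs m" for zs :: "'a list"
    by (metis count_mset mset_sort)
  have xs: "sort xs = replicate c m @ filter (\<lambda>z. m < z) (sort xs)"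
    using sorted_eq_replicate_min_append[of "sort xs" m] assms(2) by (simp add: count_sort c_def)
  have ys: "sort ys = replicate c' m @ filter (\<lambda>z. m < z) (sort ys)"
    using sorted_eq_replicate_min_append[of "sort ys" m] assms(3) by (simp add: count_sort c'_def)
  have "c' < c" using fewer by (simp add: c_def c'_def)
  moreover have "c \<le> length ys" unfolding c_def assms(1)[symmetric] by (rule count_le_length)
  ultimately have "filter (\<lambda>z. m < z) (sort ys) \<noteq> []"
    using arg_cong[OF ys, of length] by auto
  then obtain y r where yr: "filter (\<lambda>z. m < z) (sort ys) = y # r"
    by (cases "filter (\<lambda>z. m < z) (sort ys)") auto
  then have "m < y" by (metis filter_eq_ConsD)
  have sx: "sort xs = replicate c' m @ m # (replicate (c - Suc c') m @ filter (\<lambda>z. m < z) (sort xs))"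
    using xs \<open>c' < c\<close>
    by (metis Suc_leI append.assoc append_Cons le_add_diff_inverse replicate_Suc replicate_add replicate_app_Cons_same)
  have sy: "sort ys = replicate c' m @ y # r" using ys yr by simp
  show ?thesis
    by (subst sx, subst sy) (rule lexordp_append_leftI, simp add: \<open>m < y\<close>)
qed

lemma count_agent_vals:
  "count_list (agent_vals v n Q) a = card {k\<in>{1..n}. val v (blk Q k) = a}"
proof -
  have "count_list (agent_vals v n Q) a = length (filter (\<lambda>k. val v (blk Q k) = a) [1..<Suc n])"
    unfolding agent_vals_def by (induction n) auto
  also have "\<dots> = card {k\<in>{1..n}. val v (blk Q k) = a}"
    by (subst distinct_length_filter) (auto intro: arg_cong[where f = card])
  finally show ?thesis .
qed

lemma set_agent_vals: "set (agent_vals v n Q) = (\<lambda>k. val v (blk Q k)) ` {1..n}"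
  unfolding agent_vals_def by auto

section \<open>Contiguous allocations\<close>

lemma contig_nth_mono: "contig n t Q \<Longrightarrow> j \<le> k \<Longrightarrow> k \<le> n \<Longrightarrow> Q ! j \<le> Q ! k"
  unfolding contig_def by (simp add: sorted_nth_mono)

lemma contig_nth_le: "contig n t Q \<Longrightarrow> j \<le> n \<Longrightarrow> Q ! j \<le> t"
  using contig_nth_mono[of n t Q j n] by (simp add: contig_def)

lemma finite_blk [simp]: "finite (blk Q k)"
  by (simp add: blk_def)

lemma blk_subset: "contig n t Q \<Longrightarrow> k \<le> n \<Longrightarrow> blk Q k \<subseteq> {1..t}"
  unfolding blk_def using contig_nth_le[of n t Q k] by auto

lemma contig_covers:
  assumes Q: "contig n t Q" and g: "g \<in> {1..t}"
  shows "\<exists>j\<in>{1..n}. g \<in> blk Q j"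
proof -
  define j where "j = (LEAST j. g \<le> Q ! j)"
  have "g \<le> Q ! n" using Q g by (simp add: contig_def)
  then have "g \<le> Q ! j" "j \<le> n" unfolding j_def by (auto intro: LeastI Least_le)
  moreover have "j \<noteq> 0"
  proof
    assume "j = 0"
    then show False using \<open>g \<le> Q ! j\<close> Q g by (simp add: contig_def)
  qed
  moreover have "\<not> g \<le> Q ! (j - 1)"
    using \<open>j \<noteq> 0\<close> unfolding j_def by (metis diff_less j_def not_less_Least zero_less_one not_gr_zero)
  ultimately have "j \<in> {1..n}" "g \<in> blk Q j" by (auto simp: blk_def)
  then show ?thesis by blast
qed

lemma blk_list_update_other: "k \<noteq> j \<Longrightarrow> k \<noteq> Suc j \<Longrightarrow> blk (Q[j := x]) k = blk Q k"
  by (cases k) (auto simp: blk_def)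

lemma val_insert: "x \<notin> A \<Longrightarrow> finite A \<Longrightarrow> val v (insert x A) = v x + val v A"
  by (simp add: val_def)

lemma val_remove: "x \<in> A \<Longrightarrow> finite A \<Longrightarrow> val v (A - {x}) = val v A - v x"
  by (simp add: val_def sum_diff1)

definition prefix_val :: "(nat \<Rightarrow> real) \<Rightarrow> nat \<Rightarrow> real" where
  "prefix_val v k = val v {0<..k}"

lemma val_greaterThanAtMost: "a \<le> b \<Longrightarrow> val v {a<..b} = prefix_val v b - prefix_val v a"
proof -
  assume "a \<le> b"
  then have "{0<..b} = {0<..a} \<union> {a<..b}" by auto
  then show ?thesis
    unfolding prefix_val_def val_def by (simp add: sum.union_disjoint)
qed

lemma prefix_val_0 [simp]: "prefix_val v 0 = 0"
  by (simp add: prefix_val_def val_def)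

lemma prefix_val_Suc: "prefix_val v (Suc k) = prefix_val v k + v (Suc k)"
proof -
  have "{k<..Suc k} = {Suc k}" by auto
  then show ?thesis using val_greaterThanAtMost[of k "Suc k" v] by (simp add: val_def)
qed

lemma val_blk: "contig n t Q \<Longrightarrow> j \<le> n \<Longrightarrow> val v (blk Q j) = prefix_val v (Q ! j) - prefix_val v (Q ! (j - 1))"
  unfolding blk_def by (rule val_greaterThanAtMost) (rule contig_nth_mono, auto)

lemma move_last_item:
  assumes Q: "contig n t Q" and j: "1 \<le> j" "j < n" and ne: "Q ! (j - 1) < Q ! j"
  shows "contig n t (Q[j := Q ! j - 1])"
    and "Q ! j \<in> blk Q j" "Q ! j \<notin> blk Q (Suc j)"
    and "blk (Q[j := Q ! j - 1]) j = blk Q j - {Q ! j}"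
    and "blk (Q[j := Q ! j - 1]) (Suc j) = insert (Q ! j) (blk Q (Suc j))"
proof -
  have len: "length Q = Suc n" using Q by (simp add: contig_def)
  have mono: "Q ! j \<le> Q ! Suc j" using contig_nth_mono[OF Q, of j "Suc j"] j by simp
  show "contig n t (Q[j := Q ! j - 1])"
    using Q j ne len mono unfolding contig_def by (auto intro!: sorted_list_update)
  show "blk (Q[j := Q ! j - 1]) (Suc j) = insert (Q ! j) (blk Q (Suc j))"
    using len mono j ne by (auto simp: blk_def)
  show "Q ! j \<in> blk Q j" "Q ! j \<notin> blk Q (Suc j)"
    and "blk (Q[j := Q ! j - 1]) j = blk Q j - {Q ! j}"
    using ne j len by (auto simp: blk_def)
qed

lemma move_first_item:
  assumes Q: "contig n t Q" and j: "1 \<le> j" "j < n" and ne: "Q ! j < Q ! Suc j"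
  shows "contig n t (Q[j := Q ! j + 1])"
    and "Q ! j + 1 \<in> blk Q (Suc j)" "Q ! j + 1 \<notin> blk Q j"
    and "blk (Q[j := Q ! j + 1]) (Suc j) = blk Q (Suc j) - {Q ! j + 1}"
    and "blk (Q[j := Q ! j + 1]) j = insert (Q ! j + 1) (blk Q j)"
proof -
  have len: "length Q = Suc n" using Q by (simp add: contig_def)
  have mono: "Q ! (j - 1) \<le> Q ! j" using contig_nth_mono[OF Q, of "j - 1" j] j by simp
  show "contig n t (Q[j := Q ! j + 1])"
    using Q j ne len mono unfolding contig_def by (auto intro!: sorted_list_update)
  show "blk (Q[j := Q ! j + 1]) j = insert (Q ! j + 1) (blk Q j)"
    using len mono j ne by (auto simp: blk_def)
  show "Q ! j + 1 \<in> blk Q (Suc j)" "Q ! j + 1 \<notin> blk Q j"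
    and "blk (Q[j := Q ! j + 1]) (Suc j) = blk Q (Suc j) - {Q ! j + 1}"
    using ne j len by (auto simp: blk_def)
qed

section \<open>The invariant of Algorithm 3\<close>

locale leximin_min_agent =
  fixes v :: "nat \<Rightarrow> real" and n t :: nat and P :: "nat list" and i :: nat
  assumes leximin: "is_leximin v n t P"
    and agent: "i \<in> {1..n}"
    and minimal: "\<forall>j\<in>{1..n}. val v (blk P i) \<le> val v (blk P j)"
    and positive: "\<forall>g\<in>{1..t}. 0 < v g"
begin

abbreviation m :: real where "m \<equiv> val v (blk P i)"

text \<open>Both phases keep agent \<open>i\<close>'s bundle, keep every bundle worth at least \<open>m\<close>, and
  never create a new bundle of value exactly \<open>m\<close>.\<close>

definition admissible :: "nat list \<Rightarrow> bool" where
  "admissible Q \<longleftrightarrow> contig n t Q \<and> Q ! (i - 1) = P ! (i - 1) \<and> Q ! i = P ! i \<and>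
     (\<forall>k\<in>{1..n}. m \<le> val v (blk Q k) \<and> (val v (blk Q k) = m \<longrightarrow> val v (blk P k) = m))"

lemma contig_P: "contig n t P"
  using leximin by (simp add: is_leximin_def)

lemma admissible_P: "admissible P"
  using contig_P minimal by (simp add: admissible_def)

lemma admissible_contig: "admissible Q \<Longrightarrow> contig n t Q"
  by (simp add: admissible_def)

lemma admissible_blk_agent: "admissible Q \<Longrightarrow> blk Q i = blk P i"
  by (simp add: admissible_def blk_def)

lemma positive_blk: "contig n t Q \<Longrightarrow> k \<le> n \<Longrightarrow> g \<in> blk Q k \<Longrightarrow> 0 < v g"
  using blk_subset positive by blast

lemma leximin_no_fewer_minima:
  assumes Q: "contig n t Q" and above: "\<forall>k\<in>{1..n}. m \<le> val v (blk Q k)"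
    and fewer: "{k\<in>{1..n}. val v (blk Q k) = m} \<subset> {k\<in>{1..n}. val v (blk P k) = m}"
  shows False
proof -
  have "ord_class.lexordp (sort (agent_vals v n P)) (sort (agent_vals v n Q))"
  proof (rule lexordp_sort_if_fewer_minima)
    show "length (agent_vals v n P) = length (agent_vals v n Q)"
      by (simp add: agent_vals_def)
    show "\<forall>x\<in>set (agent_vals v n P). m \<le> x" using minimal by (simp add: set_agent_vals)
    show "\<forall>y\<in>set (agent_vals v n Q). m \<le> y" using above by (simp add: set_agent_vals)
    show "count_list (agent_vals v n Q) m < count_list (agent_vals v n P) m"
      unfolding count_agent_vals using fewer by (simp add: psubset_card_mono)
  qed
  then show False using leximin Q by (auto simp: is_leximin_def)
qed

lemma improvement_of_agent_impossible:
  assumes Q: "admissible Q" and Q': "contig n t Q'"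
    and improved: "\<forall>k\<in>{1..n}. blk Q' k = blk Q k \<or> m < val v (blk Q' k)"
    and agent_gains: "m < val v (blk Q' i)"
  shows False
proof (rule leximin_no_fewer_minima[OF Q'])
  show "\<forall>k\<in>{1..n}. m \<le> val v (blk Q' k)"
    using improved Q by (fastforce simp: admissible_def)
  have "{k\<in>{1..n}. val v (blk Q' k) = m} \<subseteq> {k\<in>{1..n}. val v (blk P k) = m} - {i}"
    using improved Q agent_gains by (fastforce simp: admissible_def)
  then show "{k\<in>{1..n}. val v (blk Q' k) = m} \<subset> {k\<in>{1..n}. val v (blk P k) = m}"
    using agent by blast
qed

lemma admissible_if_improved:
  assumes "admissible Q" "contig n t Q'" "Q' ! (i - 1) = P ! (i - 1)" "Q' ! i = P ! i"
    and "\<forall>k\<in>{1..n}. blk Q' k = blk Q k \<or> m < val v (blk Q' k)"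
  shows "admissible Q'"
  using assms unfolding admissible_def by (metis less_imp_le less_irrefl)

lemma transfer_from_envied:
  assumes Q: "admissible Q" and envy: "envies_ef1 v Q i j" and jr: "j \<le> n" "r \<in> {1..n}"
    and g: "g \<in> blk Q j" "g \<notin> blk Q r"
    and donor: "blk Q' j = blk Q j - {g}" and receiver: "blk Q' r = insert g (blk Q r)"
    and others: "\<And>k. k \<noteq> j \<Longrightarrow> k \<noteq> r \<Longrightarrow> blk Q' k = blk Q k"
  shows "\<forall>k\<in>{1..n}. blk Q' k = blk Q k \<or> m < val v (blk Q' k)"
    and "m < val v (blk Q' r)"
proof -
  have "0 < v g" using positive_blk[OF admissible_contig[OF Q] jr(1) g(1)] .
  moreover have "m \<le> val v (blk Q r)" using Q jr(2) by (simp add: admissible_def)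
  ultimately show rec: "m < val v (blk Q' r)" using g(2) by (simp add: receiver val_insert)
  have "m < val v (blk Q' j)"
    using envy g(1) admissible_blk_agent[OF Q] by (simp add: donor envies_ef1_def)
  with rec others show "\<forall>k\<in>{1..n}. blk Q' k = blk Q k \<or> m < val v (blk Q' k)" by metis
qed

lemma envies_ef1_imp_cut_less: "envies_ef1 v Q i j \<Longrightarrow> Q ! (j - 1) < Q ! j"
  by (auto simp: envies_ef1_def blk_def)

lemma admissible_move_left:
  assumes Q: "admissible Q" and j: "1 \<le> j" "j < i" and envy: "envies_ef1 v Q i j"
  shows "admissible (Q[j := Q ! j - 1])"
proof -
  let ?Q' = "Q[j := Q ! j - 1]"
  have "j < n" using j agent by auto
  note move = move_last_item[OF admissible_contig[OF Q] j(1) \<open>j < n\<close> envies_ef1_imp_cut_less[OF envy]]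
  have "Suc j \<in> {1..n}" using \<open>j < n\<close> by simp
  note transfer = transfer_from_envied[OF Q envy _ this move(2,3,4,5) blk_list_update_other]
  have "Suc j \<noteq> i"
    using improvement_of_agent_impossible[OF Q move(1) transfer(1)] transfer(2) \<open>j < n\<close> by auto
  then have "?Q' ! (i - 1) = P ! (i - 1)" "?Q' ! i = P ! i"
    using Q j by (auto simp: admissible_def)
  with admissible_if_improved[OF Q move(1)] transfer(1) \<open>j < n\<close> show ?thesis by simp
qed

lemma admissible_move_right:
  assumes Q: "admissible Q" and j: "i < j" "j \<le> n" and envy: "envies_ef1 v Q i j"
  shows "admissible (Q[j - 1 := Q ! (j - 1) + 1])"
proof -
  let ?Q' = "Q[j - 1 := Q ! (j - 1) + 1]"
  have j1: "1 \<le> j - 1" "j - 1 < n" and "Suc (j - 1) = j" using j agent by auto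
  note move = move_first_item[OF admissible_contig[OF Q] j1, unfolded \<open>Suc (j - 1) = j\<close>,
      OF envies_ef1_imp_cut_less[OF envy]]
  have "j - 1 \<in> {1..n}" using j1 by simp
  have others: "blk ?Q' k = blk Q k" if "k \<noteq> j" "k \<noteq> j - 1" for k
    using blk_list_update_other[of k "j - 1"] that \<open>Suc (j - 1) = j\<close> by metis
  note transfer = transfer_from_envied[OF Q envy _ \<open>j - 1 \<in> {1..n}\<close> move(2,3,4,5) others]
  have "j - 1 \<noteq> i"
    using improvement_of_agent_impossible[OF Q move(1) transfer(1)] transfer(2) j by auto
  then have "?Q' ! (i - 1) = P ! (i - 1)" "?Q' ! i = P ! i"
    using Q j by (auto simp: admissible_def)
  with admissible_if_improved[OF Q move(1)] transfer(1) j show ?thesis by simp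
qed

text \<open>\<open>settle j\<close> is the inner loop of Algorithm 3 for agent \<open>j \<noteq> i\<close>; it only moves the
  cut \<open>moving_cut j\<close> between \<open>j\<close> and its neighbour towards \<open>i\<close>.\<close>

definition moving_cut :: "nat \<Rightarrow> nat" where
  "moving_cut j = (if j < i then j else j - 1)"

definition settle :: "nat \<Rightarrow> nat list \<Rightarrow> nat list" where
  "settle j = (if j < i then while (\<lambda>Q. envies_ef1 v Q i j) (\<lambda>Q. Q[j := Q ! j - 1])
     else while (\<lambda>Q. envies_ef1 v Q i j) (\<lambda>Q. Q[j - 1 := Q ! (j - 1) + 1]))"

lemma settle_spec:
  assumes Q: "admissible Q" and j: "j \<in> {1..n}" "j \<noteq> i"
  shows "admissible (settle j Q) \<and> \<not> envies_ef1 v (settle j Q) i j \<and>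
    (\<forall>k. k \<noteq> moving_cut j \<longrightarrow> settle j Q ! k = Q ! k)"
proof (cases "j < i")
  case True
  let ?I = "\<lambda>s. admissible s \<and> (\<forall>k. k \<noteq> j \<longrightarrow> s ! k = Q ! k)"
  have step: "?I (s[j := s ! j - 1]) \<and> (s[j := s ! j - 1], s) \<in> measure (\<lambda>s. s ! j)"
    if I: "?I s" and envy: "envies_ef1 v s i j" for s
  proof -
    have "j < length s" using I j by (simp add: admissible_def contig_def)
    moreover have "0 < s ! j" using envies_ef1_imp_cut_less[OF envy] by simp
    ultimately show ?thesis
      using I admissible_move_left[OF _ _ True envy] j by simp
  qed
  have "?I (settle j Q) \<and> \<not> envies_ef1 v (settle j Q) i j"
    unfolding settle_def if_P[OF True]
    by (rule while_rule2[where P = ?I and r = "measure (\<lambda>s. s ! j)"]) (use Q step in auto)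
  then show ?thesis using True by (simp add: moving_cut_def)
next
  case False
  let ?I = "\<lambda>s. admissible s \<and> (\<forall>k. k \<noteq> j - 1 \<longrightarrow> s ! k = Q ! k)"
  have step: "?I (s[j - 1 := s ! (j - 1) + 1]) \<and>
      (s[j - 1 := s ! (j - 1) + 1], s) \<in> measure (\<lambda>s. t - s ! (j - 1))"
    if I: "?I s" and envy: "envies_ef1 v s i j" for s
  proof -
    have "j - 1 < length s" using I j admissible_contig[of s] by (auto simp: contig_def)
    moreover have "s ! (j - 1) < t"
      using envies_ef1_imp_cut_less[OF envy] contig_nth_le[OF admissible_contig, of s j] I j by simp
    moreover have "i < j" using False j by simp
    ultimately show ?thesis
      using I admissible_move_right[OF _ _ _ envy] j by simp
  qed
  have "?I (settle j Q) \<and> \<not> envies_ef1 v (settle j Q) i j"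
    unfolding settle_def if_not_P[OF False]
    by (rule while_rule2[where P = ?I and r = "measure (\<lambda>s. t - s ! (j - 1))"]) (use Q step in auto)
  then show ?thesis using False by (simp add: moving_cut_def)
qed

lemma envies_ef1_cong_admissible:
  assumes "admissible Q" "admissible Q'" "Q' ! (j - 1) = Q ! (j - 1)" "Q' ! j = Q ! j"
  shows "envies_ef1 v Q' i j = envies_ef1 v Q i j"
  using assms admissible_blk_agent by (simp add: envies_ef1_def blk_def)

lemma admissible_foldl_settle:
  assumes "sorted_wrt (\<lambda>j' j. moving_cut j \<notin> {j' - 1, j'}) js" "set js \<subseteq> {1..n} - {i}"
    and "admissible Q"
  shows "admissible (foldl (\<lambda>Q j. settle j Q) Q js) \<and>
    (\<forall>j\<in>set js. \<not> envies_ef1 v (foldl (\<lambda>Q j. settle j Q) Q js) i j)"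
  using assms
proof (induction js rule: rev_induct)
  case (snoc j js)
  let ?Q = "foldl (\<lambda>Q j. settle j Q) Q js"
  have IH: "admissible ?Q" "\<forall>j'\<in>set js. \<not> envies_ef1 v ?Q i j'"
    using snoc by (auto simp: sorted_wrt_append)
  have "j \<in> {1..n}" "j \<noteq> i" using snoc.prems(2) by auto
  note settled = settle_spec[OF IH(1) this]
  have "\<not> envies_ef1 v (settle j ?Q) i j'" if "j' \<in> set js" for j'
  proof -
    have "moving_cut j \<notin> {j' - 1, j'}" using snoc.prems(1) that by (simp add: sorted_wrt_append)
    then show ?thesis
      using envies_ef1_cong_admissible[OF IH(1), of "settle j ?Q" j'] settled IH(2) that by auto
  qed
  then show ?case using settled by simp
qed simp

lemma phases_eq_foldl_settle:
  "right_phase v n i (left_phase v i P) = foldl (\<lambda>Q j. settle j Q) P ([1..<i] @ rev [Suc i..<Suc n])"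
  unfolding left_phase_def right_phase_def foldl_append
  by (intro foldl_cong) (auto simp: settle_def)

lemma algorithm3_admissible:
  "admissible (right_phase v n i (left_phase v i P))"
  "\<forall>j\<in>{1..n} - {i}. \<not> envies_ef1 v (right_phase v n i (left_phase v i P)) i j"
proof -
  let ?js = "[1..<i] @ rev [Suc i..<Suc n]"
  have "sorted_wrt (\<lambda>j' j. moving_cut j \<notin> {j' - 1, j'}) ?js"
    unfolding sorted_wrt_append sorted_wrt_rev
    by (intro conjI sorted_wrt_mono_rel[OF _ sorted_wrt_upt]) (auto simp: moving_cut_def)
  moreover have "set ?js = {1..n} - {i}" using agent by auto
  ultimately show "admissible (right_phase v n i (left_phase v i P))"
    "\<forall>j\<in>{1..n} - {i}. \<not> envies_ef1 v (right_phase v n i (left_phase v i P)) i j"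
    using admissible_foldl_settle[of ?js P] admissible_P
    unfolding phases_eq_foldl_settle by simp_all
qed

text \<open>With a common valuation agent \<open>i\<close> holds a least valuable bundle, so it suffices that
  \<open>i\<close> envies nobody up to one item.\<close>

lemma EF1_if_agent_envies_nobody:
  assumes Q: "admissible Q" and calm: "\<forall>j\<in>{1..n} - {i}. \<not> envies_ef1 v Q i j"
  shows "EF1 v n Q"
  unfolding EF1_def
proof (intro ballI)
  fix k j assume k: "k \<in> {1..n}" and j: "j \<in> {1..n}"
  have mk: "m \<le> val v (blk Q k)" using Q k by (simp add: admissible_def)
  have mi: "val v (blk Q i) = m" using admissible_blk_agent[OF Q] by simp
  show "blk Q j = {} \<or> (\<exists>g\<in>blk Q j. val v (blk Q j - {g}) \<le> val v (blk Q k))"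
  proof (cases "j = i")
    case True
    show ?thesis
    proof (cases "blk Q j = {}")
      case False
      then obtain g where g: "g \<in> blk Q j" by auto
      have "0 < v g" using positive_blk[OF admissible_contig[OF Q] _ g] j by simp
      then have "val v (blk Q j - {g}) \<le> val v (blk Q k)"
        using g True mi mk by (simp add: val_remove)
      then show ?thesis using g by blast
    qed simp
  next
    case False
    then have "blk Q j = {} \<or> (\<exists>g\<in>blk Q j. val v (blk Q j - {g}) \<le> m)"
      using calm j mi unfolding envies_ef1_def by (auto simp: not_less)
    then show ?thesis using mk by force
  qed
qed

end

section \<open>Cuts are close to the proportional ones\<close>

lemma prefix_val_mono:
  assumes "\<forall>g\<in>{1..t}. 0 < v g" "a \<le> b" "b \<le> t"
  shows "prefix_val v a \<le> prefix_val v b"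
proof -
  have "0 \<le> val v {a<..b}" unfolding val_def
    using assms by (intro sum_nonneg) (auto intro: less_imp_le)
  then show ?thesis using val_greaterThanAtMost[OF assms(2)] by simp
qed

lemma prefix_val_strict_mono:
  assumes "\<forall>g\<in>{1..t}. 0 < v g" "a < b" "b \<le> t"
  shows "prefix_val v a < prefix_val v b"
proof -
  have "0 < val v {a<..b}" unfolding val_def using assms by (intro sum_pos) auto
  then show ?thesis using val_greaterThanAtMost[of a b] assms(2) by simp
qed

lemma least_prefix_reaching:
  assumes v: "\<forall>g\<in>{1..t}. 0 < v g \<and> v g \<le> R" and "0 \<le> R"
    and x: "0 \<le> x" "x \<le> prefix_val v t"
  defines "p \<equiv> LEAST p. x \<le> prefix_val v p"
  shows "p \<le> t" "x \<le> prefix_val v p" "prefix_val v p \<le> x + R"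
proof -
  show "p \<le> t" "x \<le> prefix_val v p"
    unfolding p_def using x(2) by (auto intro: Least_le LeastI)
  show "prefix_val v p \<le> x + R"
  proof (cases p)
    case 0
    then show ?thesis using x \<open>0 \<le> R\<close> by simp
  next
    case (Suc q)
    then have "prefix_val v q < x" unfolding p_def by (metis lessI not_less_Least not_le)
    moreover have "v (Suc q) \<le> R" using v \<open>p \<le> t\<close> Suc by simp
    ultimately show ?thesis using Suc by (simp add: prefix_val_Suc)
  qed
qed

lemma balanced_partition_exists:
  assumes v: "\<forall>g\<in>{1..t}. 0 < v g \<and> v g \<le> R" "0 \<le> R" and n: "1 \<le> n"
  shows "\<exists>Q. contig n t Q \<and> (\<forall>k\<in>{1..n}. prefix_val v t / n - R \<le> val v (blk Q k))"
proof -
  define W where "W = prefix_val v t"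
  define c where "c j = (LEAST p. real j * W / n \<le> prefix_val v p)" for j
  have "0 \<le> W" using prefix_val_mono[of t v 0 t] v by (simp add: W_def)
  have share: "real j * W / n \<le> real k * W / n" if "j \<le> k" for j k
    using that \<open>0 \<le> W\<close> by (simp add: divide_right_mono mult_right_mono)
  have "real n * W / n = W" using n by simp
  then have cut: "c j \<le> t" "real j * W / n \<le> prefix_val v (c j)"
    "prefix_val v (c j) \<le> real j * W / n + R" if "j \<le> n" for j
    using least_prefix_reaching[OF v, of "real j * W / n"] share[OF that] share[of 0 j] \<open>0 \<le> W\<close>
    unfolding c_def W_def by simp_all
  have mono: "c j \<le> c k" if "j \<le> k" "k \<le> n" for j k
    unfolding c_def[of j] using share[OF that(1)] cut(2)[OF that(2)] by (intro Least_le) simp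
  have "c 0 = 0" unfolding c_def by (rule Least_eq_0) simp
  have "c n = t"
  proof (rule ccontr)
    assume "c n \<noteq> t"
    then have "prefix_val v (c n) < W"
      using cut(1)[of n] prefix_val_strict_mono[of t v "c n" t] v by (simp add: W_def)
    then show False using cut(2)[of n] \<open>real n * W / n = W\<close> by simp
  qed
  define Q where "Q = map c [0..<Suc n]"
  have Q_nth: "Q ! j = c j" if "j \<le> n" for j
    using that unfolding Q_def by (simp del: upt_Suc)
  have Q: "contig n t Q"
    unfolding contig_def sorted_iff_nth_mono
    using Q_nth mono \<open>c 0 = 0\<close> \<open>c n = t\<close> by (simp add: Q_def del: upt_Suc)
  have "W / n - R \<le> val v (blk Q k)" if k: "k \<in> {1..n}" for k
  proof -
    have "prefix_val v (c (k - 1)) \<le> real (k - 1) * W / n + R" using k by (intro cut(3)) auto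
    moreover have "real (k - 1) * W / n = real k * W / n - W / n"
      using k by (simp add: of_nat_diff algebra_simps diff_divide_distrib)
    ultimately show ?thesis
      using val_blk[OF Q, of k v] Q_nth cut(2)[of k] k by auto
  qed
  with Q show ?thesis unfolding W_def by blast
qed

lemma prefix_val_cuts_diff_ge:
  assumes Q: "contig n t Q" and blocks: "\<forall>k\<in>{1..n}. a \<le> val v (blk Q k)" and "j + d \<le> n"
  shows "real d * a \<le> prefix_val v (Q ! (j + d)) - prefix_val v (Q ! j)"
  using \<open>j + d \<le> n\<close>
proof (induction d)
  case (Suc d)
  have "a \<le> prefix_val v (Q ! (j + Suc d)) - prefix_val v (Q ! (j + d))"
    using blocks val_blk[OF Q, of "j + Suc d" v] Suc.prems by force
  with Suc show ?case by (simp add: algebra_simps)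
qed simp

definition proportional_cuts :: "(nat \<Rightarrow> real) \<Rightarrow> nat \<Rightarrow> nat \<Rightarrow> real \<Rightarrow> nat list \<Rightarrow> bool" where
  "proportional_cuts v n t \<delta> Q \<longleftrightarrow>
     (\<forall>j\<le>n. \<bar>prefix_val v (Q ! j) - real j * prefix_val v t / n\<bar> \<le> \<delta>)"

context leximin_min_agent
begin

lemma min_value_lower_bound:
  assumes R: "\<forall>g\<in>{1..t}. v g \<le> R" "0 \<le> R" and n: "1 \<le> n"
  shows "prefix_val v t / n - R \<le> m"
proof (rule ccontr)
  assume "\<not> prefix_val v t / n - R \<le> m"
  moreover obtain Q where Q: "contig n t Q"
    and blocks: "\<forall>k\<in>{1..n}. prefix_val v t / n - R \<le> val v (blk Q k)"
    using balanced_partition_exists[OF _ R(2) n] positive R(1) by blast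
  ultimately have "\<forall>k\<in>{1..n}. m < val v (blk Q k)" by force
  then show False
    using leximin_no_fewer_minima[OF Q] agent by fastforce
qed

lemma admissible_proportional_cuts:
  assumes R: "\<forall>g\<in>{1..t}. v g \<le> R" "0 \<le> R" and n: "1 \<le> n" and Q: "admissible Q"
  shows "proportional_cuts v n t (real n * R) Q"
  unfolding proportional_cuts_def
proof (intro allI impI)
  fix j assume j: "j \<le> n"
  define W where "W = prefix_val v t"
  have "\<forall>k\<in>{1..n}. m \<le> val v (blk Q k)" using Q by (simp add: admissible_def)
  note diff_ge = prefix_val_cuts_diff_ge[OF admissible_contig[OF Q] this]
  have "Q ! 0 = 0" "Q ! n = t" using Q by (simp_all add: admissible_def contig_def)
  then have lo: "real j * m \<le> prefix_val v (Q ! j)"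
    and hi: "real (n - j) * m \<le> W - prefix_val v (Q ! j)"
    using diff_ge[of 0 j] diff_ge[of j "n - j"] j by (simp_all add: W_def)
  have m: "W / n - R \<le> m" using min_value_lower_bound[OF R n] by (simp add: W_def)
  have "real j * (W / n - R) \<le> real j * m" "real (n - j) * (W / n - R) \<le> real (n - j) * m"
    using m by (simp_all add: mult_left_mono)
  moreover have "real j * R \<le> real n * R" "real (n - j) * R \<le> real n * R"
    using j R(2) by (simp_all add: mult_right_mono)
  moreover have "real (n - j) * (W / n) = W - real j * W / n"
    using j n by (simp add: of_nat_diff algebra_simps)
  ultimately show "\<bar>prefix_val v (Q ! j) - real j * W / n\<bar> \<le> real n * R"
    using lo hi by (simp add: abs_le_iff algebra_simps)
qed

end

lemma alg3_output:
  assumes alg: "alg3 v n t Q" and v: "\<forall>g\<in>{1..t}. 0 < v g \<and> v g \<le> R" and "0 \<le> R" "1 \<le> n"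
  shows "contig n t Q \<and> EF1 v n Q \<and> proportional_cuts v n t (real n * R) Q"
proof -
  obtain P i where "is_leximin2 v n t P" "i \<in> {1..n}"
    "\<forall>j\<in>{1..n}. val v (blk P i) \<le> val v (blk P j)"
    and Q: "Q = right_phase v n i (left_phase v i P)"
    using alg unfolding alg3_def by blast
  then interpret leximin_min_agent v n t P i
    using v by unfold_locales (auto simp: is_leximin2_def)
  show ?thesis
    using algorithm3_admissible EF1_if_agent_envies_nobody admissible_contig
      admissible_proportional_cuts v \<open>0 \<le> R\<close> \<open>1 \<le> n\<close>
    unfolding Q by blast
qed

section \<open>Counting reassigned items\<close>

definition reassigned :: "nat \<Rightarrow> nat \<Rightarrow> nat list \<Rightarrow> nat list \<Rightarrow> nat set" where
  "reassigned n t Q Q' = {g\<in>{1..t}. \<not> (\<exists>j\<in>{1..n}. g \<in> blk Q j \<and> g \<in> blk Q' j)}"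

lemma reassigned_subset_cut_gaps:
  assumes Q: "contig n t Q" and Q': "contig n t' Q'" and "t \<le> t'"
  shows "reassigned n t Q Q' \<subseteq> (\<Union>k\<in>{1..<n}. {min (Q ! k) (Q' ! k)<..max (Q ! k) (Q' ! k)})"
proof
  fix g assume g: "g \<in> reassigned n t Q Q'"
  then have "g \<in> {1..t}" by (simp add: reassigned_def)
  then obtain j where j: "j \<in> {1..n}" "g \<in> blk Q j" using contig_covers[OF Q] by blast
  have "g \<notin> blk Q' j" using g j by (auto simp: reassigned_def)
  then have "g \<le> Q' ! (j - 1) \<or> Q' ! j < g" by (auto simp: blk_def)
  moreover have "Q' ! 0 = 0" "t' = Q' ! n" using Q' by (simp_all add: contig_def)
  moreover have "1 \<le> g" "g \<le> t'" using \<open>g \<in> {1..t}\<close> \<open>t \<le> t'\<close> by auto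
  ultimately have "j - 1 \<in> {1..<n} \<and> g \<le> Q' ! (j - 1) \<or> j \<in> {1..<n} \<and> Q' ! j < g"
    using j(1) by (cases "j = 1"; cases "j = n") auto
  then show "g \<in> (\<Union>k\<in>{1..<n}. {min (Q ! k) (Q' ! k)<..max (Q ! k) (Q' ! k)})"
  proof (elim disjE conjE)
    assume "j - 1 \<in> {1..<n}" "g \<le> Q' ! (j - 1)"
    moreover have "Q ! (j - 1) < g" using j(2) by (simp add: blk_def)
    ultimately show ?thesis by (intro UN_I[of "j - 1"]) auto
  next
    assume "j \<in> {1..<n}" "Q' ! j < g"
    moreover have "g \<le> Q ! j" using j(2) by (simp add: blk_def)
    ultimately show ?thesis by (intro UN_I[of j]) auto
  qed
qed

lemma prefix_val_diff_ge:
  assumes "a \<le> b" "\<forall>g\<in>{a<..b}. L \<le> v g"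
  shows "L * real (b - a) \<le> prefix_val v b - prefix_val v a"
proof -
  have "real (card {a<..b}) * L \<le> val v {a<..b}"
    unfolding val_def by (rule sum_bounded_below) (use assms(2) in auto)
  then show ?thesis using val_greaterThanAtMost[OF assms(1), of v] by (simp add: mult.commute)
qed

lemma cut_shift_bound:
  assumes n: "1 \<le> n" "k \<le> n" and L: "0 < L" and v: "\<forall>g\<in>{1..Suc t}. L \<le> v g \<and> v g \<le> R"
    and Q: "contig n t Q" "proportional_cuts v n t \<delta> Q"
    and Q': "contig n (Suc t) Q'" "proportional_cuts v n (Suc t) \<delta> Q'"
  shows "real (max (Q ! k) (Q' ! k) - min (Q ! k) (Q' ! k)) \<le> (2 * \<delta> + R) / L"
proof -
  define a b where "a = Q ! k" and "b = Q' ! k"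
  have "a \<le> Suc t" "b \<le> Suc t"
    using contig_nth_le[OF Q(1) n(2)] contig_nth_le[OF Q'(1) n(2)] by (simp_all add: a_def b_def)
  have close: "\<bar>A - B\<bar> \<le> 2 * \<delta> + R"
    if "0 \<le> w" "w \<le> R" "y = x + w" "\<bar>A - x\<bar> \<le> \<delta>" "\<bar>B - y\<bar> \<le> \<delta>" for A B x y w :: real
    using that by (simp add: abs_le_iff)
  have "L \<le> v (Suc t)" "v (Suc t) \<le> R" using v by auto
  moreover have "real k * v (Suc t) / n \<le> real n * v (Suc t) / n"
    using n(2) L \<open>L \<le> v (Suc t)\<close> by (intro divide_right_mono mult_right_mono) auto
  ultimately have "0 \<le> real k * v (Suc t) / n" "real k * v (Suc t) / n \<le> R"
    using n(1) L by auto
  moreover have "real k * prefix_val v (Suc t) / n = real k * prefix_val v t / n + real k * v (Suc t) / n"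
    by (simp add: prefix_val_Suc algebra_simps add_divide_distrib)
  moreover have "\<bar>prefix_val v a - real k * prefix_val v t / n\<bar> \<le> \<delta>"
    "\<bar>prefix_val v b - real k * prefix_val v (Suc t) / n\<bar> \<le> \<delta>"
    using Q(2) Q'(2) n(2) unfolding proportional_cuts_def a_def b_def by auto
  ultimately have "\<bar>prefix_val v a - prefix_val v b\<bar> \<le> 2 * \<delta> + R" by (rule close)
  moreover have "L * real (max a b - min a b) \<le> \<bar>prefix_val v a - prefix_val v b\<bar>"
  proof (cases "a \<le> b")
    case True
    then show ?thesis
      using prefix_val_diff_ge[OF True, of L v] v \<open>b \<le> Suc t\<close> by (force simp: max_def min_def)
  next
    case False
    then show ?thesis
      using prefix_val_diff_ge[of b a L v] v \<open>a \<le> Suc t\<close> by (force simp: max_def min_def)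
  qed
  ultimately show ?thesis
    using L unfolding a_def b_def by (simp add: pos_le_divide_eq mult.commute)
qed

lemma reassigned_card_bound:
  assumes n: "1 \<le> n" and L: "0 < L" and v: "\<forall>g\<in>{1..Suc t}. L \<le> v g \<and> v g \<le> R"
    and Q: "contig n t Q" "proportional_cuts v n t (real n * R) Q"
    and Q': "contig n (Suc t) Q'" "proportional_cuts v n (Suc t) (real n * R) Q'"
  shows "real (card (reassigned n t Q Q')) \<le> 3 * (R / L) * real n ^ 2"
proof -
  let ?gap = "\<lambda>k. {min (Q ! k) (Q' ! k)<..max (Q ! k) (Q' ! k)}"
  have "card (reassigned n t Q Q') \<le> card (\<Union>k\<in>{1..<n}. ?gap k)"
    using reassigned_subset_cut_gaps[OF Q(1) Q'(1)] by (intro card_mono) auto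
  also have "\<dots> \<le> (\<Sum>k\<in>{1..<n}. card (?gap k))" by (rule card_UN_le) simp
  finally have "real (card (reassigned n t Q Q')) \<le> (\<Sum>k\<in>{1..<n}. real (card (?gap k)))"
    by (simp only: of_nat_le_iff flip: of_nat_sum)
  also have "\<dots> \<le> (\<Sum>k\<in>{1..<n}. (2 * (real n * R) + R) / L)"
  proof (rule sum_mono)
    fix k assume "k \<in> {1..<n}"
    then have "k \<le> n" by simp
    then show "real (card (?gap k)) \<le> (2 * (real n * R) + R) / L"
      using cut_shift_bound[OF n(1) _ L v Q Q'] by (simp only: card_greaterThanAtMost)
  qed
  also have "\<dots> = (real n - 1) * (2 * real n + 1) * (R / L)"
    using n by (simp add: of_nat_diff algebra_simps add_divide_distrib diff_divide_distrib)
  also have "\<dots> \<le> 3 * (R / L) * real n ^ 2"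
  proof -
    have "L \<le> v (Suc t)" "v (Suc t) \<le> R" using v by auto
    then have "0 \<le> R / L" using L by simp
    moreover have "(real n - 1) * (2 * real n + 1) \<le> 3 * real n ^ 2"
      by (simp add: algebra_simps power2_eq_square)
    ultimately have "(real n - 1) * (2 * real n + 1) * (R / L) \<le> 3 * real n ^ 2 * (R / L)"
      by (intro mult_right_mono)
    then show ?thesis by (simp only: mult_ac)
  qed
  finally show ?thesis .
qed


lemma adjustments_eq_sum_reassigned:
  "adjustments n T A = (\<Sum>t\<in>{1..<T}. card (reassigned n t (A t) (A (Suc t))))"
  by (simp add: adjustments_def reassigned_def)

theorem mainTheorem6:
  shows "\<exists>C::real. \<forall>(n::nat) (T::nat) (v::nat \<Rightarrow> real) (L::real) (R::real) (A::nat \<Rightarrow> nat list).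
    1 \<le> n \<longrightarrow> 0 < L \<longrightarrow> L \<le> R \<longrightarrow>
    (\<forall>g\<in>{1..T}. L \<le> v g \<and> v g \<le> R) \<longrightarrow>
    (\<forall>t\<in>{1..T}. alg3 v n t (A t)) \<longrightarrow>
      (\<forall>t\<in>{1..T}. contig n t (A t) \<and> EF1 v n (A t)) \<and>
      real (adjustments n T A) \<le> C * (R / L) * real n ^ 2 * real T"
proof (intro exI[of _ 3] allI impI)
  fix n T :: nat and v :: "nat \<Rightarrow> real" and L R :: real and A :: "nat \<Rightarrow> nat list"
  assume n: "1 \<le> n" and L: "0 < L" "L \<le> R" and v: "\<forall>g\<in>{1..T}. L \<le> v g \<and> v g \<le> R"
    and alg: "\<forall>t\<in>{1..T}. alg3 v n t (A t)"
  have round: "contig n t (A t) \<and> EF1 v n (A t) \<and> proportional_cuts v n t (real n * R) (A t)"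
    if "t \<in> {1..T}" for t
    using alg3_output[of v n t "A t" R] alg v L n that by force
  have "real (card (reassigned n t (A t) (A (Suc t)))) \<le> 3 * (R / L) * real n ^ 2"
    if "t \<in> {1..<T}" for t
  proof (rule reassigned_card_bound[OF n L(1)])
    show "\<forall>g\<in>{1..Suc t}. L \<le> v g \<and> v g \<le> R" using v that by auto
  qed (use round[of t] round[of "Suc t"] that in auto)
  then have "real (adjustments n T A) \<le> (\<Sum>t\<in>{1..<T}. 3 * (R / L) * real n ^ 2)"
    unfolding adjustments_eq_sum_reassigned of_nat_sum by (intro sum_mono) auto
  also have "\<dots> = real (T - 1) * (3 * (R / L) * real n ^ 2)" by simp
  also have "\<dots> \<le> real T * (3 * (R / L) * real n ^ 2)" using L by (intro mult_right_mono) auto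
  also have "\<dots> = 3 * (R / L) * real n ^ 2 * real T" by (rule mult.commute)
  finally show "(\<forall>t\<in>{1..T}. contig n t (A t) \<and> EF1 v n (A t)) \<and>
      real (adjustments n T A) \<le> 3 * (R / L) * real n ^ 2 * real T"
    using round by blast
qed

end
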